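(* In the setup described in the context, suppose the Ricci tensor of $(M,g,Q)$ is $$\rho=\frac{3\tau+\tau^*}{8}g+\frac{3\tau^*+\tau}{8}\tilde g .$$ Then the curvature tensor is $$R=\frac{\tau+\tau^*}{4}\pi_1+\frac{3\tau^*+\tau}{8}\pi_2,$$ where $$\pi_1(x,y,z,u)=g(y,z)g(x,u)-g(x,z)g(y,u),$$ $$\pi_2(x,y,z,u)=g(y,z)\tilde g(x,u)+g(x,u)\tilde g(y,z)-g(x,z)\tilde g(y,u)-g(y,u)\tilde g(x,z).$$
   Context: Let $M$ be a 3-dimensional smooth manifold. Fix a coordinate chart $(x^1,x^2,x^3)$ with coordinate vector fields $\partial_i$. Structures: - $g$ is a Riemannian metric with $g(\partial_1,\partial_1)=g(\partial_2,\partial_2)=A$, $g(\partial_3,\partial_3)=B$ and $g(\partial_i,\partial_j)=0$ for $i\ne j$. Here $A,B$ are smooth positive functions. - $Q$ is the $(1,1)$-tensor field with $Q\partial_1=\partial_2$, $Q\partial_2=-\partial_1$, $Q\partial_3=\partial_3$. - $P=Q^2$ and $\tilde g(x,y)=g(x,Py)$. Curvature: - $\nabla$ is the Levi-Civita connection of $g$. - $R(x,y)z=\nabla_x\nabla_yz-\nabla_y\nabla_xz-\nabla_{[x,y]}z$, and $R$ also denotes the $(0,4)$-tensor $R(x,y,z,t)=g(R(x,y)z,t)$. - $\rho(y,z)=g^{ij}R(e_i,y,z,e_j)$, $\tau=g^{ij}\rho_{ij}$ and $\tau^*=\tilde g^{ij}\rho_{ij}$. *)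

theory Defs
  imports "HOL-Analysis.Analysis"
begin

text \<open>Coordinates of the chart: points of an open set U of real^3.
  Index type 3 has elements 1, 2, 3 (where 3 = 0 in the numeral type).
  Tensors are represented by their components w.r.t. the coordinate frame \<partial>_i.\<close>

type_synonym pt = "real^3"
type_synonym mat3 = "real^3^3"

definition ee :: "3 \<Rightarrow> pt" where "ee i = axis i 1"

definition pd :: "3 \<Rightarrow> (pt \<Rightarrow> real) \<Rightarrow> pt \<Rightarrow> real" where
  "pd i f p = deriv (\<lambda>t. f (p + t *\<^sub>R ee i)) 0"

fun pds :: "3 list \<Rightarrow> (pt \<Rightarrow> real) \<Rightarrow> pt \<Rightarrow> real" where
  "pds [] f = f"
| "pds (i # is) f = pd i (pds is f)"

definition smooth_on :: "pt set \<Rightarrow> (pt \<Rightarrow> real) \<Rightarrow> bool" where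
  "smooth_on U f \<longleftrightarrow> (\<forall>is. continuous_on U (pds is f) \<and>
      (\<forall>i. \<forall>p\<in>U. (\<lambda>t. pds is f (p + t *\<^sub>R ee i)) differentiable (at 0)))"

definition gmat :: "(pt \<Rightarrow> real) \<Rightarrow> (pt \<Rightarrow> real) \<Rightarrow> pt \<Rightarrow> mat3" where
  "gmat A B p = (\<chi> i j. if i = j then (if i = 3 then B p else A p) else 0)"

text \<open>Q as a matrix: column j is Q \<partial>_j. Q\<partial>1 = \<partial>2, Q\<partial>2 = -\<partial>1, Q\<partial>3 = \<partial>3.\<close>
definition Qmat :: mat3 where
  "Qmat = (\<chi> i j. if i = 2 \<and> j = 1 then 1 else if i = 1 \<and> j = 2 then -1
                  else if i = 3 \<and> j = 3 then 1 else 0)"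

definition Pmat :: mat3 where "Pmat = Qmat ** Qmat"

text \<open>tilde g(x,y) = g(x, P y): components g(\<partial>_i, P \<partial>_j).\<close>
definition gtil :: "(pt \<Rightarrow> mat3) \<Rightarrow> pt \<Rightarrow> mat3" where
  "gtil G p = G p ** Pmat"

definition chr :: "(pt \<Rightarrow> mat3) \<Rightarrow> 3 \<Rightarrow> 3 \<Rightarrow> 3 \<Rightarrow> pt \<Rightarrow> real" where
  "chr G k i j p = (1/2) * (\<Sum>l\<in>UNIV. matrix_inv (G p) $ k $ l *
      (pd i (\<lambda>q. G q $ j $ l) p + pd j (\<lambda>q. G q $ i $ l) p - pd l (\<lambda>q. G q $ i $ j) p))"

text \<open>R(\<partial>_i,\<partial>_j)\<partial>_k = \<Sum>_l Rup i j k l \<partial>_l, with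
  R(x,y)z = \<nabla>_x\<nabla>_y z - \<nabla>_y\<nabla>_x z - \<nabla>_[x,y] z.\<close>
definition Rup :: "(pt \<Rightarrow> mat3) \<Rightarrow> 3 \<Rightarrow> 3 \<Rightarrow> 3 \<Rightarrow> 3 \<Rightarrow> pt \<Rightarrow> real" where
  "Rup G i j k l p = pd i (chr G l j k) p - pd j (chr G l i k) p
     + (\<Sum>m\<in>UNIV. chr G m j k p * chr G l i m p - chr G m i k p * chr G l j m p)"

definition Rlow :: "(pt \<Rightarrow> mat3) \<Rightarrow> 3 \<Rightarrow> 3 \<Rightarrow> 3 \<Rightarrow> 3 \<Rightarrow> pt \<Rightarrow> real" where
  "Rlow G i j k l p = (\<Sum>m\<in>UNIV. Rup G i j k m p * G p $ m $ l)"

definition ricci :: "(pt \<Rightarrow> mat3) \<Rightarrow> 3 \<Rightarrow> 3 \<Rightarrow> pt \<Rightarrow> real" where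
  "ricci G j k p = (\<Sum>a\<in>UNIV. \<Sum>b\<in>UNIV. matrix_inv (G p) $ a $ b * Rlow G a j k b p)"

definition scal :: "(pt \<Rightarrow> mat3) \<Rightarrow> pt \<Rightarrow> real" where
  "scal G p = (\<Sum>i\<in>UNIV. \<Sum>j\<in>UNIV. matrix_inv (G p) $ i $ j * ricci G i j p)"

definition scal_star :: "(pt \<Rightarrow> mat3) \<Rightarrow> pt \<Rightarrow> real" where
  "scal_star G p = (\<Sum>i\<in>UNIV. \<Sum>j\<in>UNIV. matrix_inv (gtil G p) $ i $ j * ricci G i j p)"

definition pi1 :: "mat3 \<Rightarrow> 3 \<Rightarrow> 3 \<Rightarrow> 3 \<Rightarrow> 3 \<Rightarrow> real" where
  "pi1 g x y z u = g $ y $ z * g $ x $ u - g $ x $ z * g $ y $ u"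

definition pi2 :: "mat3 \<Rightarrow> mat3 \<Rightarrow> 3 \<Rightarrow> 3 \<Rightarrow> 3 \<Rightarrow> 3 \<Rightarrow> real" where
  "pi2 g gt x y z u = g $ y $ z * gt $ x $ u + g $ x $ u * gt $ y $ z
                      - g $ x $ z * gt $ y $ u - g $ y $ u * gt $ x $ z"

end

theory Submission
  imports Defs
begin

text \<open>In dimension 3 the Weyl tensor vanishes, so the curvature tensor is determined by the
  Ricci tensor: \<open>R = \<rho> \<owedge> g - \<tau>/2 \<pi>\<^sub>1\<close>, with the Kulkarni--Nomizu product
  \<open>(\<rho> \<owedge> g)(x,y,z,u) = \<rho>(y,z) g(x,u) + \<rho>(x,u) g(y,z) - \<rho>(x,z) g(y,u) - \<rho>(y,u) g(x,z)\<close>.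
  For the diagonal metric at hand this is checked component by component from the Christoffel
  symbols, using the symmetry of second partial derivatives of the smooth functions \<open>A\<close> and \<open>B\<close>.
  Substituting \<open>\<rho> = a g + b g\<tilde>\<close> gives \<open>\<rho> \<owedge> g = 2a \<pi>\<^sub>1 + b \<pi>\<^sub>2\<close>, and with
  \<open>a = (3\<tau> + \<tau>\<^sup>*)/8\<close> the coefficient of \<open>\<pi>\<^sub>1\<close> becomes \<open>2a - \<tau>/2 = (\<tau> + \<tau>\<^sup>*)/4\<close>.\<close>

lemma matrix_inv_eqI:
  fixes M D :: "real^'n^'n"
  assumes "M ** D = mat 1" "D ** M = mat 1"
  shows "matrix_inv M = D"
proof -
  have "M ** matrix_inv M = mat 1 \<and> matrix_inv M ** M = mat 1"
    unfolding matrix_inv_def by (rule someI_ex) (use assms in blast)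
  then have "matrix_inv M ** M = mat 1" by blast
  then have "matrix_inv M ** (M ** D) = D" by (simp add: matrix_mul_assoc)
  then show ?thesis using assms(1) by simp
qed

lemma matrix_inv_diagonal:
  fixes d :: "'n::finite \<Rightarrow> real"
  assumes "\<And>i. d i \<noteq> 0"
  shows "matrix_inv (\<chi> i j. if i = j then d i else 0) = (\<chi> i j. if i = j then 1 / d i else 0)"
  by (rule matrix_inv_eqI)
    (use assms in \<open>auto simp: matrix_matrix_mult_def mat_def vec_eq_iff if_distrib[of "\<lambda>x. x * _"] cong: if_cong\<close>)

definition has_pd :: "3 \<Rightarrow> (pt \<Rightarrow> real) \<Rightarrow> pt \<Rightarrow> real \<Rightarrow> bool" where
  "has_pd m f p v \<longleftrightarrow> ((\<lambda>t. f (p + t *\<^sub>R ee m)) has_real_derivative v) (at 0)"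

lemma pd_eqI: "has_pd m f p v \<Longrightarrow> pd m f p = v"
  unfolding has_pd_def pd_def by (rule DERIV_imp_deriv)

lemma has_pd_add: "has_pd m f p a \<Longrightarrow> has_pd m g p b \<Longrightarrow> has_pd m (\<lambda>q. f q + g q) p (a + b)"
  unfolding has_pd_def by (rule DERIV_add)

lemma has_pd_diff: "has_pd m f p a \<Longrightarrow> has_pd m g p b \<Longrightarrow> has_pd m (\<lambda>q. f q - g q) p (a - b)"
  unfolding has_pd_def by (rule DERIV_diff)

lemma has_pd_cmult: "has_pd m f p a \<Longrightarrow> has_pd m (\<lambda>q. c * f q) p (c * a)"
  unfolding has_pd_def by (rule DERIV_cmult)

lemma has_pd_divide:
  assumes "has_pd m f p a" "has_pd m g p b" "g p \<noteq> 0"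
  shows "has_pd m (\<lambda>q. f q / g q) p ((a * g p - f p * b) / (g p * g p))"
  using DERIV_divide[OF assms(1,2)[unfolded has_pd_def]] assms(3) by (simp add: has_pd_def)

lemma pd_const: "pd m (\<lambda>q. c) p = 0"
  by (rule pd_eqI) (simp add: has_pd_def)

lemma pd_cong_open:
  assumes "open U" "p \<in> U" "\<And>q. q \<in> U \<Longrightarrow> f q = g q"
  shows "pd m f p = pd m g p"
proof -
  have "((\<lambda>t::real. p + t *\<^sub>R ee m) \<longlongrightarrow> p + 0 *\<^sub>R ee m) (nhds 0)"
    by (intro tendsto_intros filterlim_ident)
  then have "eventually (\<lambda>t. p + t *\<^sub>R ee m \<in> U) (nhds 0)"
    using assms(1,2) by (simp add: topological_tendstoD)
  then show ?thesis
    unfolding pd_def by (rule deriv_cong_ev[OF eventually_mono]) (auto simp: assms(3))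
qed

lemma smooth_on_line_deriv:
  assumes "smooth_on U f" "q + s *\<^sub>R ee i \<in> U"
  shows "((\<lambda>s'. pds js f (q + s' *\<^sub>R ee i)) has_real_derivative pd i (pds js f) (q + s *\<^sub>R ee i)) (at s)"
proof -
  have "((\<lambda>t. pds js f (q + s *\<^sub>R ee i + t *\<^sub>R ee i)) has_real_derivative
      pd i (pds js f) (q + s *\<^sub>R ee i)) (at 0)"
    using assms unfolding smooth_on_def pd_def by (simp add: DERIV_deriv_iff_real_differentiable)
  then have "((\<lambda>t. pds js f (q + (t + s) *\<^sub>R ee i)) has_real_derivative pd i (pds js f) (q + s *\<^sub>R ee i)) (at 0)"
    by (simp add: scaleR_add_left add_ac)
  then show ?thesis using DERIV_shift[of "\<lambda>s'. pds js f (q + s' *\<^sub>R ee i)" _ 0 s] by simp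
qed

lemma smooth_on_has_pd:
  assumes "smooth_on U f" "p \<in> U"
  shows "has_pd m f p (pd m f p)" and "has_pd m (pd i f) p (pd m (pd i f) p)"
  using smooth_on_line_deriv[OF assms(1), of p 0 m "[]"] smooth_on_line_deriv[OF assms(1), of p 0 m "[i]"] assms(2)
  by (simp_all add: has_pd_def)

lemma dist_coordinate_box:
  assumes "0 \<le> s" "s \<le> t" "0 \<le> r" "r \<le> t"
  shows "dist (p + s *\<^sub>R ee i + r *\<^sub>R ee j) p \<le> 2 * t"
proof -
  have "dist (p + s *\<^sub>R ee i + r *\<^sub>R ee j) p = norm (s *\<^sub>R ee i + r *\<^sub>R ee j)"
    by (simp add: dist_norm)
  also have "\<dots> \<le> norm (s *\<^sub>R ee i) + norm (r *\<^sub>R ee j)"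
    by (rule norm_triangle_ineq)
  also have "\<dots> = s + r" using assms by (simp add: ee_def)
  finally show ?thesis using assms by simp
qed

lemma second_difference_mvt:
  assumes sm: "smooth_on U f" and t: "0 < t"
    and box: "\<And>s r. 0 \<le> s \<Longrightarrow> s \<le> t \<Longrightarrow> 0 \<le> r \<Longrightarrow> r \<le> t \<Longrightarrow> p + s *\<^sub>R ee i + r *\<^sub>R ee j \<in> U"
  shows "\<exists>\<xi> \<eta>. 0 < \<xi> \<and> \<xi> < t \<and> 0 < \<eta> \<and> \<eta> < t \<and>
    f (p + t *\<^sub>R ee i + t *\<^sub>R ee j) - f (p + t *\<^sub>R ee i) - f (p + t *\<^sub>R ee j) + f p
      = t\<^sup>2 * pd j (pd i f) (p + \<xi> *\<^sub>R ee i + \<eta> *\<^sub>R ee j)"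
proof -
  define \<phi> where "\<phi> s = f (p + t *\<^sub>R ee j + s *\<^sub>R ee i) - f (p + s *\<^sub>R ee i)" for s
  have "\<exists>\<xi>. 0 < \<xi> \<and> \<xi> < t \<and> \<phi> t - \<phi> 0 = (t - 0) *
      (pd i (pds [] f) (p + t *\<^sub>R ee j + \<xi> *\<^sub>R ee i) - pd i (pds [] f) (p + \<xi> *\<^sub>R ee i))"
    unfolding \<phi>_def
  proof (rule MVT2[OF t])
    fix x assume x: "0 \<le> x" "x \<le> t"
    have u1: "p + t *\<^sub>R ee j + x *\<^sub>R ee i \<in> U" and u2: "p + x *\<^sub>R ee i \<in> U"
      using box[of x t] box[of x 0] x t by (simp_all add: add_ac)
    from DERIV_diff[OF smooth_on_line_deriv[OF sm u1, of "[]"] smooth_on_line_deriv[OF sm u2, of "[]"]]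
    show "((\<lambda>s. f (p + t *\<^sub>R ee j + s *\<^sub>R ee i) - f (p + s *\<^sub>R ee i)) has_real_derivative
        pd i (pds [] f) (p + t *\<^sub>R ee j + x *\<^sub>R ee i) - pd i (pds [] f) (p + x *\<^sub>R ee i)) (at x)"
      by simp
  qed
  then obtain \<xi> where \<xi>: "0 < \<xi>" "\<xi> < t"
    "\<phi> t - \<phi> 0 = t * (pd i f (p + \<xi> *\<^sub>R ee i + t *\<^sub>R ee j) - pd i f (p + \<xi> *\<^sub>R ee i + 0 *\<^sub>R ee j))"
    by (auto simp: add_ac)
  have "\<exists>\<eta>. 0 < \<eta> \<and> \<eta> < t \<and> pds [i] f (p + \<xi> *\<^sub>R ee i + t *\<^sub>R ee j) - pds [i] f (p + \<xi> *\<^sub>R ee i + 0 *\<^sub>R ee j)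
      = (t - 0) * pd j (pds [i] f) (p + \<xi> *\<^sub>R ee i + \<eta> *\<^sub>R ee j)"
    by (rule MVT2[OF t], rule smooth_on_line_deriv[OF sm box]) (use \<xi> in auto)
  then obtain \<eta> where \<eta>: "0 < \<eta>" "\<eta> < t"
    "pd i f (p + \<xi> *\<^sub>R ee i + t *\<^sub>R ee j) - pd i f (p + \<xi> *\<^sub>R ee i + 0 *\<^sub>R ee j)
      = t * pd j (pd i f) (p + \<xi> *\<^sub>R ee i + \<eta> *\<^sub>R ee j)"
    by auto
  have "f (p + t *\<^sub>R ee i + t *\<^sub>R ee j) - f (p + t *\<^sub>R ee i) - f (p + t *\<^sub>R ee j) + f p = \<phi> t - \<phi> 0"
    by (simp add: \<phi>_def add_ac)
  then show ?thesis using \<xi> \<eta> by (auto simp: power2_eq_square)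
qed

lemma second_difference_quotient_tendsto:
  assumes U: "open U" "p \<in> U" and sm: "smooth_on U f"
  shows "((\<lambda>t. (f (p + t *\<^sub>R ee i + t *\<^sub>R ee j) - f (p + t *\<^sub>R ee i) - f (p + t *\<^sub>R ee j) + f p) / t\<^sup>2)
    \<longlongrightarrow> pd j (pd i f) p) (at_right 0)"
proof (rule tendstoI)
  fix e :: real assume e: "0 < e"
  obtain r where r: "r > 0" "ball p r \<subseteq> U" using U open_contains_ball by blast
  have "continuous_on U (pds [j, i] f)" using sm unfolding smooth_on_def by blast
  then have "isCont (pd j (pd i f)) p" using U continuous_on_eq_continuous_at by fastforce
  then obtain \<delta> where \<delta>: "\<delta> > 0" "\<And>x. dist x p < \<delta> \<Longrightarrow> dist (pd j (pd i f) x) (pd j (pd i f) p) < e"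
    using e unfolding continuous_at_eps_delta by blast
  show "\<forall>\<^sub>F t in at_right 0. dist ((f (p + t *\<^sub>R ee i + t *\<^sub>R ee j) - f (p + t *\<^sub>R ee i)
      - f (p + t *\<^sub>R ee j) + f p) / t\<^sup>2) (pd j (pd i f) p) < e"
    unfolding eventually_at_right_field
  proof (intro exI conjI allI impI)
    show "0 < min r \<delta> / 2" using r \<delta> by simp
    fix t :: real assume t: "0 < t" "t < min r \<delta> / 2"
    have near: "dist (p + s *\<^sub>R ee i + r' *\<^sub>R ee j) p < min r \<delta>"
      if "0 \<le> s" "s \<le> t" "0 \<le> r'" "r' \<le> t" for s r'
      using dist_coordinate_box[OF that, of p i j] t by linarith
    then have "p + s *\<^sub>R ee i + r' *\<^sub>R ee j \<in> U"
      if "0 \<le> s" "s \<le> t" "0 \<le> r'" "r' \<le> t" for s r'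
      using r that by (fastforce simp: dist_commute)
    then obtain \<xi> \<eta> where \<xi>\<eta>: "0 < \<xi>" "\<xi> < t" "0 < \<eta>" "\<eta> < t"
      and Delta: "f (p + t *\<^sub>R ee i + t *\<^sub>R ee j) - f (p + t *\<^sub>R ee i) - f (p + t *\<^sub>R ee j) + f p
        = t\<^sup>2 * pd j (pd i f) (p + \<xi> *\<^sub>R ee i + \<eta> *\<^sub>R ee j)"
      using second_difference_mvt[OF sm t(1)] by blast
    have "dist (p + \<xi> *\<^sub>R ee i + \<eta> *\<^sub>R ee j) p < \<delta>"
      using near[of \<xi> \<eta>] \<xi>\<eta> by simp
    then show "dist ((f (p + t *\<^sub>R ee i + t *\<^sub>R ee j) - f (p + t *\<^sub>R ee i)
      - f (p + t *\<^sub>R ee j) + f p) / t\<^sup>2) (pd j (pd i f) p) < e"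
      using \<delta>(2) Delta t by simp
  qed
qed

lemma pd_commute:
  assumes "open U" "p \<in> U" "smooth_on U f"
  shows "pd j (pd i f) p = pd i (pd j f) p"
proof (rule tendsto_unique[OF trivial_limit_at_right_real])
  show "((\<lambda>t. (f (p + t *\<^sub>R ee i + t *\<^sub>R ee j) - f (p + t *\<^sub>R ee i) - f (p + t *\<^sub>R ee j) + f p) / t\<^sup>2)
    \<longlongrightarrow> pd j (pd i f) p) (at_right 0)"
    by (rule second_difference_quotient_tendsto[OF assms])
  show "((\<lambda>t. (f (p + t *\<^sub>R ee i + t *\<^sub>R ee j) - f (p + t *\<^sub>R ee i) - f (p + t *\<^sub>R ee j) + f p) / t\<^sup>2)
    \<longlongrightarrow> pd i (pd j f) p) (at_right 0)"
    using second_difference_quotient_tendsto[OF assms, of j i] by (simp add: algebra_simps)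
qed

definition gdiag :: "(pt \<Rightarrow> real) \<Rightarrow> (pt \<Rightarrow> real) \<Rightarrow> 3 \<Rightarrow> pt \<Rightarrow> real" where
  "gdiag A B k = (if k = 3 then B else A)"

lemma gmat_entry: "gmat A B q $ i $ j = (if i = j then gdiag A B i q else 0)"
  by (simp add: gmat_def gdiag_def)

lemma matrix_inv_gmat_entry:
  assumes "A q \<noteq> 0" "B q \<noteq> 0"
  shows "matrix_inv (gmat A B q) $ a $ b = (if a = b then 1 / gdiag A B a q else 0)"
proof -
  have "gmat A B q = (\<chi> i j. if i = j then gdiag A B i q else 0)"
    by (simp add: vec_eq_iff gmat_entry)
  moreover have "\<And>i. gdiag A B i q \<noteq> 0" using assms by (simp add: gdiag_def)
  ultimately show ?thesis by (simp add: matrix_inv_diagonal)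
qed

lemma chr_gmat:
  assumes "A q \<noteq> 0" "B q \<noteq> 0"
  shows "chr (gmat A B) k i j q =
    (of_bool (j = k) * pd i (gdiag A B k) q + of_bool (i = k) * pd j (gdiag A B k) q
     - of_bool (i = j) * pd k (gdiag A B i) q) / (2 * gdiag A B k q)"
proof -
  have "pd m (\<lambda>q. gmat A B q $ a $ b) q = of_bool (a = b) * pd m (gdiag A B a) q" for m a b
    by (cases "a = b") (simp_all add: gmat_entry pd_const)
  then show ?thesis
    unfolding chr_def matrix_inv_gmat_entry[where A = A and B = B and q = q, OF assms]
    by (simp add: if_distrib[of "\<lambda>x. x * _"] sum.delta cong: if_cong)
qed

lemma Rlow_gmat: "Rlow (gmat A B) x y z u q = Rup (gmat A B) x y z u q * gdiag A B u q"
  unfolding Rlow_def gmat_entry by (simp add: if_distrib[of "\<lambda>x. _ * x"] sum.delta cong: if_cong)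

lemma ricci_gmat:
  assumes "A q \<noteq> 0" "B q \<noteq> 0"
  shows "ricci (gmat A B) j k q = (\<Sum>a\<in>UNIV. Rup (gmat A B) a j k a q)"
proof -
  have "gdiag A B a q \<noteq> 0" for a using assms by (simp add: gdiag_def)
  then show ?thesis
    unfolding ricci_def matrix_inv_gmat_entry[where A = A and B = B and q = q, OF assms] Rlow_gmat
    by (simp add: if_distrib[of "\<lambda>x. x * _"] sum.delta cong: if_cong)
qed

lemma scal_gmat:
  assumes "A q \<noteq> 0" "B q \<noteq> 0"
  shows "scal (gmat A B) q = (\<Sum>a\<in>UNIV. ricci (gmat A B) a a q / gdiag A B a q)"
  unfolding scal_def matrix_inv_gmat_entry[where A = A and B = B and q = q, OF assms]
  by (simp add: if_distrib[of "\<lambda>x. x * _"] sum.delta cong: if_cong)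

lemma Rup_swap: "Rup G j i k l q = - Rup G i j k l q"
  unfolding Rup_def sum_subtractf by simp

lemma Rlow_swap: "Rlow G j i k l q = - Rlow G i j k l q"
  unfolding Rlow_def Rup_swap[of G j i] by (simp add: sum_negf)

definition curvature_from_ricci :: "(pt \<Rightarrow> mat3) \<Rightarrow> pt \<Rightarrow> 3 \<Rightarrow> 3 \<Rightarrow> 3 \<Rightarrow> 3 \<Rightarrow> real" where
  "curvature_from_ricci G p x y z u =
     ricci G y z p * G p $ x $ u + ricci G x u p * G p $ y $ z
   - ricci G x z p * G p $ y $ u - ricci G y u p * G p $ x $ z
   - scal G p / 2 * pi1 (G p) x y z u"

lemma curvature_from_ricci_swap:
  "curvature_from_ricci G p y x z u = - curvature_from_ricci G p x y z u"
  by (simp add: curvature_from_ricci_def pi1_def algebra_simps)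

lemma curvature_from_ricci_linear:
  assumes "\<And>j k. ricci G j k p = a * G p $ j $ k + b * gtil G p $ j $ k"
  shows "curvature_from_ricci G p x y z u
    = (2 * a - scal G p / 2) * pi1 (G p) x y z u + b * pi2 (G p) (gtil G p) x y z u"
  unfolding curvature_from_ricci_def assms pi1_def pi2_def by (simp add: algebra_simps)

context
  fixes U :: "pt set" and A B :: "pt \<Rightarrow> real"
  assumes U: "open U" and sA: "smooth_on U A" and sB: "smooth_on U B"
    and pos: "\<forall>q\<in>U. A q > 0 \<and> B q > 0"
begin

lemma pd_chr_gmat:
  assumes p: "p \<in> U"
  shows "pd m (chr (gmat A B) k i j) p =
    ((of_bool (j = k) * pd m (pd i (gdiag A B k)) p + of_bool (i = k) * pd m (pd j (gdiag A B k)) p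
       - of_bool (i = j) * pd m (pd k (gdiag A B i)) p) * (2 * gdiag A B k p)
     - (of_bool (j = k) * pd i (gdiag A B k) p + of_bool (i = k) * pd j (gdiag A B k) p
       - of_bool (i = j) * pd k (gdiag A B i) p) * (2 * pd m (gdiag A B k) p))
    / ((2 * gdiag A B k p) * (2 * gdiag A B k p))" (is "_ = ?rhs")
proof -
  have g: "smooth_on U (gdiag A B k)" for k using sA sB by (simp add: gdiag_def)
  have "pd m (chr (gmat A B) k i j) p = pd m (\<lambda>q. (of_bool (j = k) * pd i (gdiag A B k) q
      + of_bool (i = k) * pd j (gdiag A B k) q - of_bool (i = j) * pd k (gdiag A B i) q)
      / (2 * gdiag A B k q)) p"
    by (rule pd_cong_open[OF U p], rule chr_gmat) (use pos in auto)
  also have "\<dots> = ?rhs"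
    using pos p
    by (intro pd_eqI has_pd_divide has_pd_diff has_pd_add has_pd_cmult smooth_on_has_pd[OF g p])
      (auto simp: gdiag_def)
  finally show ?thesis .
qed

lemma Rlow_gmat_eq_curvature_from_ricci:
  assumes p: "p \<in> U"
  shows "Rlow (gmat A B) x y z u p = curvature_from_ricci (gmat A B) p x y z u"
proof -
  have nz: "A p \<noteq> 0" "B p \<noteq> 0" and "A p > 0" "B p > 0" using pos p by auto
  \<comment> \<open>one orientation per pair, so that simp normalises all mixed partials without looping\<close>
  note pd_sym = pd_commute[OF U p sA, of 1 2] pd_commute[OF U p sA, of 1 3] pd_commute[OF U p sA, of 2 3]
    pd_commute[OF U p sB, of 1 2] pd_commute[OF U p sB, of 1 3] pd_commute[OF U p sB, of 2 3]
  have pair: "Rlow (gmat A B) x y z u p = curvature_from_ricci (gmat A B) p x y z u"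
    if "(x, y) \<in> {(1, 2), (1, 3), (2, 3)}" for x y z u
    using that exhaust_3[of z] exhaust_3[of u] \<open>A p > 0\<close> \<open>B p > 0\<close>
    unfolding curvature_from_ricci_def scal_gmat[where A = A and B = B, OF nz]
      ricci_gmat[where A = A and B = B, OF nz] Rlow_gmat pi1_def gmat_entry
    by (elim insertE disjE; simp add: Rup_def sum_3 chr_gmat[where A = A and B = B, OF nz]
          pd_chr_gmat[OF p] gdiag_def pd_sym; simp add: field_simps)
  consider "x = y" | "(x, y) \<in> {(1, 2), (1, 3), (2, 3)}" | "(y, x) \<in> {(1, 2), (1, 3), (2, 3)}"
    using exhaust_3[of x] exhaust_3[of y] by fastforce
  then show ?thesis
  proof cases
    case 1
    then show ?thesis
      using Rlow_swap[of "gmat A B" x x z u p] curvature_from_ricci_swap[of "gmat A B" p x x z u] by simp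
  next
    case 2
    then show ?thesis by (rule pair)
  next
    case 3
    then show ?thesis
      using pair Rlow_swap[of "gmat A B" y x z u p] curvature_from_ricci_swap[of "gmat A B" p y x z u] by simp
  qed
qed

end

theorem theorem5p9:
  fixes U :: "(real^3) set" and A B :: "real^3 \<Rightarrow> real"
  assumes "open U"
    and "smooth_on U A" and "smooth_on U B"
    and "\<forall>p\<in>U. A p > 0 \<and> B p > 0"
    and "\<forall>p\<in>U. \<forall>j k. ricci (gmat A B) j k p =
           (3 * scal (gmat A B) p + scal_star (gmat A B) p) / 8 * gmat A B p $ j $ k
         + (3 * scal_star (gmat A B) p + scal (gmat A B) p) / 8 * gtil (gmat A B) p $ j $ k"
  shows "\<forall>p\<in>U. \<forall>x y z u. Rlow (gmat A B) x y z u p =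
           (scal (gmat A B) p + scal_star (gmat A B) p) / 4 * pi1 (gmat A B p) x y z u
         + (3 * scal_star (gmat A B) p + scal (gmat A B) p) / 8
             * pi2 (gmat A B p) (gtil (gmat A B) p) x y z u"
proof (intro ballI allI)
  fix p x y z u assume p: "p \<in> U"
  let ?\<tau> = "scal (gmat A B) p" and ?\<tau>s = "scal_star (gmat A B) p"
  have "Rlow (gmat A B) x y z u p = curvature_from_ricci (gmat A B) p x y z u"
    by (rule Rlow_gmat_eq_curvature_from_ricci[OF assms(1-4) p])
  also have "\<dots> = (2 * ((3 * ?\<tau> + ?\<tau>s) / 8) - ?\<tau> / 2) * pi1 (gmat A B p) x y z u
      + (3 * ?\<tau>s + ?\<tau>) / 8 * pi2 (gmat A B p) (gtil (gmat A B) p) x y z u"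
    by (rule curvature_from_ricci_linear) (use assms(5) p in blast)
  also have "2 * ((3 * ?\<tau> + ?\<tau>s) / 8) - ?\<tau> / 2 = (?\<tau> + ?\<tau>s) / 4"
    by simp
  finally show "Rlow (gmat A B) x y z u p =
      (?\<tau> + ?\<tau>s) / 4 * pi1 (gmat A B p) x y z u
      + (3 * ?\<tau>s + ?\<tau>) / 8 * pi2 (gmat A B p) (gtil (gmat A B) p) x y z u" .
qed

end
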